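(* There is a unique morphism of cosimplicial objects in $\mathsf{Cat}_\Delta$ \[ \varphi=(\varphi_n)_{n\ge 0}\colon \widetilde{\mathfrak C}[\Delta^\bullet]\to \Delta^\bullet_{\overline W} \] such that for every $n\ge 0$ the simplicial functor $\varphi_n\colon \widetilde{\mathfrak C}[\Delta^n]\to\Delta^n_{\overline W}$ is the identity on objects.
   Context: $\mathsf{Cat}_\Delta$ denotes the category of small simplicially enriched categories ("simplicial categories"); for a simplicial category $\mathcal C$ and objects $x,y$, $\mathcal C(x,y)$ is the simplicial set of maps and its $n$-simplices are called $n$-arrows. The cosimplicial simplicial category $\widetilde{\mathfrak C}[\Delta^\bullet]$: $\widetilde{\mathfrak C}[\Delta^n]$ has objects $0,\dots,n$; for $i\le j$, $\widetilde{\mathfrak C}[\Delta^n](i,j)=N(P_{i,j}^{\mathrm{op}})$, where $P_{i,j}$ is the poset of subsets $I\subseteq[n]$ with $\min I=i$, $\max I=j$, ordered by inclusion (so $P_{i,j}^{\mathrm{op}}$ is ordered by reverse inclusion), and the mapping simplicial set is empty if $i>j$; composition is induced by union of subsets. A poset map $\alpha\colon[p]\to[q]$ acts by $I\mapsto\alpha(I)$. The cosimplicial simplicial category $\Delta^\bullet_{\overline W}$: $\Delta^n_{\overline W}$ is the simplicial category freely generated by an $(n-i)$-arrow $g_{n,i}\colon i-1\to i$ for each $1\le i\le n$. Explicitly, its objects are $0,\dots,n$, and $\Delta^n_{\overline W}(i,j)=\prod_{n-j\le s<n-i}\Delta^s=\Delta^{n-j}\times\cdots\times\Delta^{n-i-1}$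 if $i\le j$ (the empty product being $\Delta^0$) and $\emptyset$ if $i>j$; composition $\Delta^n_{\overline W}(j,k)\times\Delta^n_{\overline W}(i,j)\to\Delta^n_{\overline W}(i,k)$ is the identity map of $\prod_{n-k\le s<n-i}\Delta^s$; $g_{n,i}$ is the top nondegenerate simplex of $\Delta^n_{\overline W}(i-1,i)=\Delta^{n-i}$. Coface maps $\partial_i\colon\Delta^{n-1}_{\overline W}\to\Delta^n_{\overline W}$ ($n\ge1$, $0\le i\le n$) are determined on generators by $\partial_i(g_{n-1,j})=d_{i-j}g_{n,j}$ if $j<i$ or $i=n$; $=g_{n,i-1}\circ d_0 g_{n,i}$ if $j=i<n$; $=g_{n,j+1}$ if $j>i$. Codegeneracy maps $\sigma_i\colon\Delta^{n+1}_{\overline W}\to\Delta^n_{\overline W}$ ($0\le i\le n$) are given by $\sigma_i(g_{n+1,j})=s_{i-j}g_{n,j}$ if $j\le i$; $=\mathrm{id}_i$ if $j=i+1$; $=g_{n,j-1}$ if $j>i+1$. Here $d_k,s_k$ are the simplicial face and degeneracy operators on arrows. *)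

theory Defs
  imports Main
begin

text \<open>A k-simplex of a nerve / of a standard simplex is represented by the list of its
  k+1 vertices (a monotone map [k] to the poset). The face d_i deletes entry i,
  the degeneracy s_i repeats entry i.\<close>

definition ldel :: "nat \<Rightarrow> 'a list \<Rightarrow> 'a list" where
  "ldel i xs = take i xs @ drop (Suc i) xs"

definition ldup :: "nat \<Rightarrow> 'a list \<Rightarrow> 'a list" where
  "ldup i xs = take (Suc i) xs @ drop i xs"

text \<open>sHom C x y k is the set of k-arrows x to y; sFace i / sDegen i are the simplicial
  operators d_i / s_i on arrows; sComp C x y z g f is the composite g o f of k-arrows;
  sId C x k is the (degenerate) identity k-arrow of x.\<close>

record ('o, 'a) scat =
  sObj :: "'o set"
  sHom :: "'o \<Rightarrow> 'o \<Rightarrow> nat \<Rightarrow> 'a set"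
  sFace :: "nat \<Rightarrow> 'a \<Rightarrow> 'a"
  sDegen :: "nat \<Rightarrow> 'a \<Rightarrow> 'a"
  sComp :: "'o \<Rightarrow> 'o \<Rightarrow> 'o \<Rightarrow> 'a \<Rightarrow> 'a \<Rightarrow> 'a"
  sId :: "'o \<Rightarrow> nat \<Rightarrow> 'a"

definition sfunctor ::
  "('o, 'a) scat \<Rightarrow> ('p, 'b) scat \<Rightarrow> ('o \<Rightarrow> 'p) \<Rightarrow> ('o \<Rightarrow> 'o \<Rightarrow> 'a \<Rightarrow> 'b) \<Rightarrow> bool" where
  "sfunctor C D Fo Fa \<longleftrightarrow>
     (\<forall>x\<in>sObj C. Fo x \<in> sObj D) \<and>
     (\<forall>x\<in>sObj C. \<forall>y\<in>sObj C. \<forall>k. \<forall>f\<in>sHom C x y k.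
        Fa x y f \<in> sHom D (Fo x) (Fo y) k) \<and>
     (\<forall>x\<in>sObj C. \<forall>y\<in>sObj C. \<forall>k. \<forall>f\<in>sHom C x y (Suc k). \<forall>i\<le>Suc k.
        Fa x y (sFace C i f) = sFace D i (Fa x y f)) \<and>
     (\<forall>x\<in>sObj C. \<forall>y\<in>sObj C. \<forall>k. \<forall>f\<in>sHom C x y k. \<forall>i\<le>k.
        Fa x y (sDegen C i f) = sDegen D i (Fa x y f)) \<and>
     (\<forall>x\<in>sObj C. \<forall>y\<in>sObj C. \<forall>z\<in>sObj C. \<forall>k. \<forall>f\<in>sHom C x y k. \<forall>g\<in>sHom C y z k.
        Fa x z (sComp C x y z g f) = sComp D (Fo x) (Fo y) (Fo z) (Fa y z g) (Fa x y f)) \<and>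
     (\<forall>x\<in>sObj C. \<forall>k. Fa x x (sId C x k) = sId D (Fo x) k)"

definition sfun_agree ::
  "('o, 'a) scat \<Rightarrow> ('o \<Rightarrow> 'p) \<Rightarrow> ('o \<Rightarrow> 'o \<Rightarrow> 'a \<Rightarrow> 'b)
     \<Rightarrow> ('o \<Rightarrow> 'p) \<Rightarrow> ('o \<Rightarrow> 'o \<Rightarrow> 'a \<Rightarrow> 'b) \<Rightarrow> bool" where
  "sfun_agree C Fo Fa Go Ga \<longleftrightarrow>
     (\<forall>x\<in>sObj C. Fo x = Go x) \<and>
     (\<forall>x\<in>sObj C. \<forall>y\<in>sObj C. \<forall>k. \<forall>f\<in>sHom C x y k. Fa x y f = Ga x y f)"

text \<open>cLev X n is X^n. (cCofO X n i, cCofA X n i) is the coface functor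
  d^i : X^(n-1) -> X^n (for 1 <= n, i <= n); (cCodO X n i, cCodA X n i) is the
  codegeneracy functor s^i : X^(n+1) -> X^n (for i <= n).\<close>

record ('o, 'a) cosimp =
  cLev :: "nat \<Rightarrow> ('o, 'a) scat"
  cCofO :: "nat \<Rightarrow> nat \<Rightarrow> 'o \<Rightarrow> 'o"
  cCofA :: "nat \<Rightarrow> nat \<Rightarrow> 'o \<Rightarrow> 'o \<Rightarrow> 'a \<Rightarrow> 'a"
  cCodO :: "nat \<Rightarrow> nat \<Rightarrow> 'o \<Rightarrow> 'o"
  cCodA :: "nat \<Rightarrow> nat \<Rightarrow> 'o \<Rightarrow> 'o \<Rightarrow> 'a \<Rightarrow> 'a"

definition cosimp_morphism ::
  "('o, 'a) cosimp \<Rightarrow> ('p, 'b) cosimp \<Rightarrow> (nat \<Rightarrow> 'o \<Rightarrow> 'p)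
     \<Rightarrow> (nat \<Rightarrow> 'o \<Rightarrow> 'o \<Rightarrow> 'a \<Rightarrow> 'b) \<Rightarrow> bool" where
  "cosimp_morphism X Y Po Pa \<longleftrightarrow>
     (\<forall>n. sfunctor (cLev X n) (cLev Y n) (Po n) (Pa n)) \<and>
     (\<forall>n i. 1 \<le> n \<and> i \<le> n \<longrightarrow>
        sfun_agree (cLev X (n - 1))
          (\<lambda>x. Po n (cCofO X n i x))
          (\<lambda>x y f. Pa n (cCofO X n i x) (cCofO X n i y) (cCofA X n i x y f))
          (\<lambda>x. cCofO Y n i (Po (n - 1) x))
          (\<lambda>x y f. cCofA Y n i (Po (n - 1) x) (Po (n - 1) y) (Pa (n - 1) x y f))) \<and>
     (\<forall>n i. i \<le> n \<longrightarrow>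
        sfun_agree (cLev X (Suc n))
          (\<lambda>x. Po n (cCodO X n i x))
          (\<lambda>x y f. Pa n (cCodO X n i x) (cCodO X n i y) (cCodA X n i x y f))
          (\<lambda>x. cCodO Y n i (Po (Suc n) x))
          (\<lambda>x y f. cCodA Y n i (Po (Suc n) x) (Po (Suc n) y) (Pa (Suc n) x y f)))"

definition cof_map :: "nat \<Rightarrow> nat \<Rightarrow> nat" where
  "cof_map i j = (if j < i then j else Suc j)"

definition codeg_map :: "nat \<Rightarrow> nat \<Rightarrow> nat" where
  "codeg_map i j = (if j \<le> i then j else j - 1)"

definition Psub :: "nat \<Rightarrow> nat \<Rightarrow> nat \<Rightarrow> nat set set" where
  "Psub n i j = {I. I \<subseteq> {0..n} \<and> I \<noteq> {} \<and> Min I = i \<and> Max I = j}"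

text \<open>k-simplices of N(P_{i,j}^op): chains I_0 >= ... >= I_k in reverse inclusion order.\<close>

definition Ct_hom :: "nat \<Rightarrow> nat \<Rightarrow> nat \<Rightarrow> nat \<Rightarrow> nat set list set" where
  "Ct_hom n i j k = (if i \<le> j then
     {Ls. length Ls = Suc k \<and> (\<forall>t<Suc k. Ls ! t \<in> Psub n i j) \<and>
          (\<forall>t<k. Ls ! Suc t \<subseteq> Ls ! t)}
   else {})"

definition Ct :: "nat \<Rightarrow> (nat, nat set list) scat" where
  "Ct n = \<lparr> sObj = {0..n}, sHom = Ct_hom n, sFace = ldel, sDegen = ldup,
            sComp = (\<lambda>_ _ _ g f. map2 (\<union>) g f),
            sId = (\<lambda>i k. replicate (Suc k) {i}) \<rparr>"

definition Ctilde :: "(nat, nat set list) cosimp" where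
  "Ctilde = \<lparr> cLev = Ct,
     cCofO = (\<lambda>n i. cof_map i),
     cCofA = (\<lambda>n i a b Ls. map (\<lambda>I. cof_map i ` I) Ls),
     cCodO = (\<lambda>n i. codeg_map i),
     cCodA = (\<lambda>n i a b Ls. map (\<lambda>I. codeg_map i ` I) Ls) \<rparr>"

definition simp_set :: "nat \<Rightarrow> nat \<Rightarrow> nat list set" where
  "simp_set s k = {L. length L = Suc k \<and> sorted L \<and> (\<forall>v\<in>set L. v \<le> s)}"

text \<open>A k-arrow i -> j of Delta^n_Wbar is a tuple in the product of Delta^s over
  n-j <= s < n-i, stored as a list whose position t is the factor s = n-j+t.
  Composition is then concatenation (identity of the product), identities are empty tuples.\<close>

definition DW_hom :: "nat \<Rightarrow> nat \<Rightarrow> nat \<Rightarrow> nat \<Rightarrow> nat list list set" where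
  "DW_hom n i j k = (if i \<le> j then
     {xs. length xs = j - i \<and> (\<forall>t<j - i. xs ! t \<in> simp_set (n - j + t) k)}
   else {})"

definition DWcat :: "nat \<Rightarrow> (nat, nat list list) scat" where
  "DWcat n = \<lparr> sObj = {0..n}, sHom = DW_hom n,
               sFace = (\<lambda>i. map (ldel i)), sDegen = (\<lambda>i. map (ldup i)),
               sComp = (\<lambda>_ _ _ g f. g @ f), sId = (\<lambda>_ _. []) \<rparr>"

definition topsimp :: "nat \<Rightarrow> nat list" where
  "topsimp s = [0..<Suc s]"

text \<open>The factor s of the tuple at position t of a k-arrow a -> b corresponds to
  the generator g_{m,b-t}; free_ext extends an assignment G of images of generators to
  all arrows of the freely generated simplicial category (x = theta^*(g) maps to
  theta^*(G g), composites to composites).\<close>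

definition gen_act :: "nat list list \<Rightarrow> nat list \<Rightarrow> nat list list" where
  "gen_act T \<theta> = map (\<lambda>L. map (nth L) \<theta>) T"

definition free_ext :: "(nat \<Rightarrow> nat list list) \<Rightarrow> nat \<Rightarrow> nat list list \<Rightarrow> nat list list" where
  "free_ext G b xs = concat (map (\<lambda>t. gen_act (G (b - t)) (xs ! t)) [0..<length xs])"

text \<open>Images of generators under the coface d^i : Delta^(n-1)_W -> Delta^n_W
  (generator g_{n-1,j}) and codegeneracy s^i : Delta^(n+1)_W -> Delta^n_W
  (generator g_{n+1,j}). The generator g_{n,j} is the one-factor tuple [topsimp (n-j)].\<close>

definition DW_cof_gen :: "nat \<Rightarrow> nat \<Rightarrow> nat \<Rightarrow> nat list list" where
  "DW_cof_gen n i j =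
     (if j < i then [ldel (i - j) (topsimp (n - j))]
      else if j = i then [topsimp (n - Suc i), ldel 0 (topsimp (n - i))]
      else [topsimp (n - Suc j)])"

definition DW_cod_gen :: "nat \<Rightarrow> nat \<Rightarrow> nat \<Rightarrow> nat list list" where
  "DW_cod_gen n i j =
     (if j \<le> i then [ldup (i - j) (topsimp (n - j))]
      else if j = Suc i then []
      else [topsimp (n - (j - 1))])"

definition DWbar :: "(nat, nat list list) cosimp" where
  "DWbar = \<lparr> cLev = DWcat,
     cCofO = (\<lambda>n i. cof_map i),
     cCofA = (\<lambda>n i a b xs. free_ext (DW_cof_gen n i) b xs),
     cCodO = (\<lambda>n i. codeg_map i),
     cCodA = (\<lambda>n i a b xs. free_ext (DW_cod_gen n i) b xs) \<rparr>"

end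

theory Submission
  imports Defs
begin

text \<open>A k-arrow x \<rightarrow> y of C~[Delta^n] is a chain I_0 \<supseteq> ... \<supseteq> I_k in P_{x,y}.
  Its image has, for every x < l \<le> y, the component in Delta^(n-l) with vertices
  min {z \<in> I_t. l \<le> z} - l. This formula visibly commutes with faces, degeneracies and unions
  of chains, and a case analysis of the images of the generators shows that it commutes with
  cofaces and codegeneracies.

  Uniqueness: an edge {a, b} of [n] with n \<ge> 2 avoids some vertex i, so it is the image of an
  edge under the coface d^i; this reduces its image to the only 0-arrow of Delta^1_W(0, 1) = Delta^0.
  Every vertex I of P_{x,y} is a composite of edges, and a simplex of positive dimension in a
  product of simplices is determined by its first and last faces.\<close>

lemma sfunctor_hom:
  "sfunctor C D Fo Fa \<Longrightarrow> x \<in> sObj C \<Longrightarrow> y \<in> sObj C \<Longrightarrow> f \<in> sHom C x y k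
    \<Longrightarrow> Fa x y f \<in> sHom D (Fo x) (Fo y) k"
  unfolding sfunctor_def by auto

lemma sfunctor_face:
  "sfunctor C D Fo Fa \<Longrightarrow> x \<in> sObj C \<Longrightarrow> y \<in> sObj C \<Longrightarrow> f \<in> sHom C x y (Suc k)
    \<Longrightarrow> i \<le> Suc k \<Longrightarrow> Fa x y (sFace C i f) = sFace D i (Fa x y f)"
  unfolding sfunctor_def by auto

lemma sfunctor_comp:
  "sfunctor C D Fo Fa \<Longrightarrow> x \<in> sObj C \<Longrightarrow> y \<in> sObj C \<Longrightarrow> z \<in> sObj C
    \<Longrightarrow> f \<in> sHom C x y k \<Longrightarrow> g \<in> sHom C y z k
    \<Longrightarrow> Fa x z (sComp C x y z g f) = sComp D (Fo x) (Fo y) (Fo z) (Fa y z g) (Fa x y f)"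
  unfolding sfunctor_def by auto

lemma sfunctor_id:
  "sfunctor C D Fo Fa \<Longrightarrow> x \<in> sObj C \<Longrightarrow> Fa x x (sId C x k) = sId D (Fo x) k"
  unfolding sfunctor_def by auto

lemma ldel_map: "ldel i (map g xs) = map g (ldel i xs)"
  unfolding ldel_def by (simp add: take_map drop_map)

lemma ldup_map: "ldup i (map g xs) = map g (ldup i xs)"
  unfolding ldup_def by (simp add: take_map drop_map)

lemma nth_ldel_upt:
  "j < N \<Longrightarrow> m < N - 1 \<Longrightarrow> ldel j [0..<N] ! m = (if m < j then m else Suc m)"
  unfolding ldel_def by (simp add: nth_append min_def)

lemma nth_ldup_upt:
  "j < N \<Longrightarrow> m \<le> N \<Longrightarrow> ldup j [0..<N] ! m = (if m \<le> j then m else m - 1)"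
  unfolding ldup_def by (simp add: nth_append min_def)

lemma length_ldel: "j < length xs \<Longrightarrow> length (ldel j xs) = length xs - 1"
  unfolding ldel_def by simp

lemma ldel_first_last_eqI:
  assumes "length L = Suc (Suc k)" "length M = Suc (Suc k)"
    and "ldel 0 L = ldel 0 M" "ldel (Suc k) L = ldel (Suc k) M"
  shows "L = M"
proof (rule nth_equalityI)
  have "tl L = tl M" "butlast L = butlast M"
    using assms by (simp_all add: ldel_def drop_Suc butlast_conv_take)
  fix t assume "t < length L"
  then consider "t < Suc k" | "t = Suc k" using assms(1) by linarith
  then show "L ! t = M ! t"
  proof cases
    case 1
    then show ?thesis using \<open>butlast L = butlast M\<close> assms(1,2) by (metis nth_butlast length_butlast diff_Suc_1)
  next
    case 2
    then show ?thesis using \<open>tl L = tl M\<close> assms(1,2) by (metis nth_tl length_tl diff_Suc_1 lessI)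
  qed
qed (use assms in simp)

lemma sorted_wrt_ldel: "sorted_wrt R xs \<Longrightarrow> sorted_wrt R (ldel j xs)"
proof -
  assume "sorted_wrt R xs"
  then have "sorted_wrt R (take j xs)" "sorted_wrt R (drop j xs)"
    and "\<forall>a\<in>set (take j xs). \<forall>b\<in>set (drop j xs). R a b"
    using sorted_wrt_append[of R "take j xs" "drop j xs"] by simp_all
  moreover have "drop (Suc j) xs = drop 1 (drop j xs)" by simp
  ultimately show ?thesis
    unfolding ldel_def sorted_wrt_append
    by (metis in_set_dropD sorted_wrt_drop)
qed

lemma nth_rev_upt_Suc: "t < y - x \<Longrightarrow> rev [Suc x..<Suc y] ! t = y - t"
  by (simp add: rev_nth del: upt_Suc)

lemma mono_cof_map: "mono (cof_map i)"
  unfolding mono_def cof_map_def by auto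

lemma mono_codeg_map: "mono (codeg_map i)"
  unfolding mono_def codeg_map_def by auto

lemma cof_map_codeg_map: "c \<noteq> i \<Longrightarrow> cof_map i (codeg_map i c) = c"
  unfolding cof_map_def codeg_map_def by auto

lemma mem_Psub_iff: "I \<in> Psub n x y \<longleftrightarrow> x \<in> I \<and> y \<in> I \<and> I \<subseteq> {x..y} \<and> y \<le> n"
proof
  assume "I \<in> Psub n x y"
  then have fin: "finite I" and "I \<noteq> {}" "I \<subseteq> {0..n}" "Min I = x" "Max I = y"
    unfolding Psub_def by (auto intro: finite_subset)
  moreover from this have "x \<in> I" "y \<in> I" by (metis Min_in, metis Max_in)
  moreover have "I \<subseteq> {Min I..Max I}" using fin by auto
  ultimately show "x \<in> I \<and> y \<in> I \<and> I \<subseteq> {x..y} \<and> y \<le> n" by auto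
next
  assume "x \<in> I \<and> y \<in> I \<and> I \<subseteq> {x..y} \<and> y \<le> n"
  moreover from this have "finite I" by (meson finite_atLeastAtMost finite_subset)
  ultimately show "I \<in> Psub n x y"
    unfolding Psub_def by (auto intro!: Min_eqI Max_eqI)
qed

lemma Psub_bounds: "I \<in> Psub n x y \<Longrightarrow> x \<le> y \<and> y \<le> n"
  by (auto simp: mem_Psub_iff)

lemma Psub_finite: "I \<in> Psub n x y \<Longrightarrow> finite I"
  by (auto simp: mem_Psub_iff intro: finite_subset)

lemma mem_Ct_hom_iff:
  "f \<in> Ct_hom n x y k \<longleftrightarrow> length f = Suc k \<and> set f \<subseteq> Psub n x y \<and> sorted_wrt (\<supseteq>) f"
proof -
  have "x \<le> y" if "length f = Suc k" "set f \<subseteq> Psub n x y"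
    using that Psub_bounds[of "hd f"] by (metis hd_in_set list.size(3) nat.distinct(1) subsetD)
  moreover have "sorted_wrt (\<supseteq>) f \<longleftrightarrow> (\<forall>t<k. f ! Suc t \<subseteq> f ! t)" if "length f = Suc k"
    using that by (simp add: sorted_wrt_iff_nth_Suc_transp transp_def)
  ultimately show ?thesis
    unfolding Ct_hom_def by (auto simp: subset_code(1) all_set_conv_all_nth)
qed

lemma Ct_hom_bounds: "f \<in> Ct_hom n x y k \<Longrightarrow> x \<le> y \<and> y \<le> n"
  unfolding mem_Ct_hom_iff using Psub_bounds[of "hd f"]
  by (metis hd_in_set list.size(3) nat.distinct(1) subsetD)

lemma edge_in_Psub: "a \<le> b \<Longrightarrow> b \<le> n \<Longrightarrow> {a, b} \<in> Psub n a b"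
  by (simp add: mem_Psub_iff)

lemma singleton_in_Ct_hom: "I \<in> Psub n a b \<Longrightarrow> [I] \<in> Ct_hom n a b 0"
  by (simp add: mem_Ct_hom_iff)

lemma ldel_in_Ct_hom:
  assumes "f \<in> Ct_hom n x y (Suc k)" "j \<le> Suc k"
  shows "ldel j f \<in> Ct_hom n x y k"
proof -
  have "set (ldel j f) \<subseteq> set f"
    unfolding ldel_def by (auto dest: in_set_takeD in_set_dropD)
  then show ?thesis
    using assms by (auto simp: mem_Ct_hom_iff sorted_wrt_ldel length_ldel)
qed

lemma DW_hom_1_0_1_0: "DW_hom 1 0 1 0 = {[[0]]}"
proof -
  have "L = [0]" if "L \<in> simp_set 0 0" for L
    using that unfolding simp_set_def by (cases L) auto
  then show ?thesis
    unfolding DW_hom_def by (auto simp: simp_set_def length_Suc_conv)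
qed

lemma DW_hom_eqI:
  assumes "xs \<in> DW_hom n x y (Suc k)" "ys \<in> DW_hom n x y (Suc k)"
    and "map (ldel 0) xs = map (ldel 0) ys" "map (ldel (Suc k)) xs = map (ldel (Suc k)) ys"
  shows "xs = ys"
proof (rule nth_equalityI)
  have xy: "x \<le> y" using assms(1) unfolding DW_hom_def by (auto split: if_splits)
  then show len: "length xs = length ys" using assms(1,2) unfolding DW_hom_def by simp
  fix t assume t: "t < length xs"
  then have "length (xs ! t) = Suc (Suc k)" "length (ys ! t) = Suc (Suc k)"
    using assms(1,2) xy len unfolding DW_hom_def simp_set_def by auto
  moreover have "ldel 0 (xs ! t) = ldel 0 (ys ! t)" "ldel (Suc k) (xs ! t) = ldel (Suc k) (ys ! t)"
    using assms(3,4) t len by (metis nth_map)+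
  ultimately show "xs ! t = ys ! t" by (rule ldel_first_last_eqI)
qed

section \<open>The comparison map\<close>

definition offset_above :: "nat \<Rightarrow> nat set \<Rightarrow> nat" where
  "offset_above l I = Min {z \<in> I. l \<le> z} - l"

text \<open>List position t of an arrow x \<rightarrow> y of Delta^n_W holds the factor Delta^(n-l) with l = y - t.\<close>

definition phi_arrow :: "nat \<Rightarrow> nat \<Rightarrow> nat set list \<Rightarrow> nat list list" where
  "phi_arrow x y f = map (\<lambda>l. map (offset_above l) f) (rev [Suc x..<Suc y])"

lemma offset_aboveE:
  assumes "finite I" "y \<in> I" "l \<le> y"
  obtains m where "m \<in> I" "l \<le> m" "m \<le> y" "\<And>z. z \<in> I \<Longrightarrow> l \<le> z \<Longrightarrow> m \<le> z"
    "offset_above l I = m - l"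
proof -
  have fin: "finite {z \<in> I. l \<le> z}" and ne: "y \<in> {z \<in> I. l \<le> z}" using assms by auto
  have "Min {z \<in> I. l \<le> z} \<in> {z \<in> I. l \<le> z}" using fin ne by (intro Min_in) auto
  then show thesis
    by (intro that[of "Min {z \<in> I. l \<le> z}"]) (use fin ne in \<open>auto simp: offset_above_def\<close>)
qed

lemma offset_above_antimono:
  assumes "I \<subseteq> J" "finite J" "y \<in> I" "l \<le> y"
  shows "offset_above l J \<le> offset_above l I"
  unfolding offset_above_def using assms by (intro diff_le_mono Min_antimono) auto

lemma offset_above_Un_below:
  assumes "\<forall>z\<in>F. z < l"
  shows "offset_above l (G \<union> F) = offset_above l G"
proof -
  have "{z \<in> G \<union> F. l \<le> z} = {z \<in> G. l \<le> z}" using assms by auto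
  then show ?thesis unfolding offset_above_def by simp
qed

lemma offset_above_Un_above:
  assumes "finite F" "finite G" "\<forall>z\<in>G. y \<le> z" "y \<in> F" "l \<le> y"
  shows "offset_above l (G \<union> F) = offset_above l F"
proof -
  obtain m where m: "m \<in> F" "l \<le> m" "m \<le> y" "\<And>z. z \<in> F \<Longrightarrow> l \<le> z \<Longrightarrow> m \<le> z"
    and "offset_above l F = m - l"
    using offset_aboveE[OF assms(1,4,5)] by blast
  moreover have "Min {z \<in> G \<union> F. l \<le> z} = m"
    using m assms by (intro Min_eqI) force+
  ultimately show ?thesis unfolding offset_above_def by simp
qed

lemma offset_above_image:
  assumes "mono h" "finite I" "y \<in> I" "l \<le> y"
    and threshold: "\<And>z. l' \<le> h z \<longleftrightarrow> l \<le> z"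
    and column: "\<And>m. m \<in> I \<Longrightarrow> l \<le> m \<Longrightarrow> \<theta> ! (m - l) = h m - l'"
  shows "\<theta> ! offset_above l I = offset_above l' (h ` I)"
proof -
  obtain m where m: "m \<in> I" "l \<le> m" "\<And>z. z \<in> I \<Longrightarrow> l \<le> z \<Longrightarrow> m \<le> z"
    and "offset_above l I = m - l"
    using offset_aboveE[OF assms(2-4)] by metis
  moreover have "Min {w \<in> h ` I. l' \<le> w} = h m"
    using m threshold \<open>mono h\<close> assms(2) by (intro Min_eqI) (auto intro: monoD)
  ultimately show ?thesis
    using column unfolding offset_above_def by simp
qed

lemma phi_arrow_face: "phi_arrow x y (ldel i f) = map (ldel i) (phi_arrow x y f)"
  unfolding phi_arrow_def by (simp add: ldel_map comp_def)

lemma phi_arrow_degen: "phi_arrow x y (ldup i f) = map (ldup i) (phi_arrow x y f)"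
  unfolding phi_arrow_def by (simp add: ldup_map comp_def)

lemma phi_arrow_in_DW_hom:
  assumes "f \<in> Ct_hom n x y k"
  shows "phi_arrow x y f \<in> DW_hom n x y k"
proof -
  have len: "length f = Suc k" and P: "set f \<subseteq> Psub n x y" and chain: "sorted_wrt (\<supseteq>) f"
    using assms by (simp_all add: mem_Ct_hom_iff)
  have xy: "x \<le> y" and yn: "y \<le> n"
    using Ct_hom_bounds[OF assms] by simp_all
  have column: "map (offset_above l) f \<in> simp_set (n - l) k" if "x < l" "l \<le> y" for l
  proof -
    have fin: "finite I" if "I \<in> set f" for I
      using that P Psub_finite by blast
    have "offset_above l I \<le> n - l" if I: "I \<in> set f" for I
    proof -
      have "y \<in> I" using I P by (auto simp: mem_Psub_iff)
      then obtain m where "m \<le> y" "offset_above l I = m - l"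
        using offset_aboveE[OF fin[OF I] _ \<open>l \<le> y\<close>] by metis
      then show ?thesis using yn by simp
    qed
    moreover have "sorted (map (offset_above l) f)"
    proof (rule sorted_wrt_map_mono[OF chain])
      fix I J assume "I \<in> set f" "J \<in> set f" "I \<supseteq> J"
      then show "offset_above l I \<le> offset_above l J"
        using P fin \<open>l \<le> y\<close> by (intro offset_above_antimono[where y = y]) (auto simp: mem_Psub_iff)
    qed
    ultimately show ?thesis
      unfolding simp_set_def using len by auto
  qed
  have "phi_arrow x y f ! t \<in> simp_set (n - y + t) k" if "t < y - x" for t
    using column[of "y - t"] that yn by (simp add: phi_arrow_def nth_rev_upt_Suc del: upt_Suc)
  then show ?thesis
    unfolding DW_hom_def using xy by (simp add: phi_arrow_def del: upt_Suc)
qed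

lemma phi_arrow_comp:
  assumes f: "f \<in> Ct_hom n x y k" and g: "g \<in> Ct_hom n y z k"
  shows "phi_arrow x z (map2 (\<union>) g f) = phi_arrow y z g @ phi_arrow x y f"
proof -
  have lens: "length f = Suc k" "length g = Suc k"
    and Pf: "set f \<subseteq> Psub n x y" and Pg: "set g \<subseteq> Psub n y z"
    using f g by (simp_all add: mem_Ct_hom_iff)
  have xy: "x \<le> y" and yz: "y \<le> z"
    using Ct_hom_bounds[OF f] Ct_hom_bounds[OF g] by simp_all
  have P: "f ! t \<in> Psub n x y" "g ! t \<in> Psub n y z" if "t < Suc k" for t
    using that lens by (metis Pf Pg nth_mem subsetD)+
  have fin: "finite (f ! t)" "finite (g ! t)" if "t < Suc k" for t
    using P[OF that] by (simp_all add: Psub_finite)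
  have sub: "f ! t \<subseteq> {x..y}" "g ! t \<subseteq> {y..z}" and mem: "y \<in> f ! t" "y \<in> g ! t"
    if "t < Suc k" for t
    using P[OF that] by (simp_all add: mem_Psub_iff)
  have upper: "map (offset_above l) (map2 (\<union>) g f) = map (offset_above l) g"
    if "y < l" for l
  proof (rule nth_equalityI)
    fix t assume "t < length (map (offset_above l) (map2 (\<union>) g f))"
    then have t: "t < Suc k" using lens by simp
    have "offset_above l (g ! t \<union> f ! t) = offset_above l (g ! t)"
      using sub[OF t] that by (intro offset_above_Un_below) auto
    then show "map (offset_above l) (map2 (\<union>) g f) ! t = map (offset_above l) g ! t"
      using t lens by simp
  qed (use lens in simp)
  have lower: "map (offset_above l) (map2 (\<union>) g f) = map (offset_above l) f"
    if "l \<le> y" for l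
  proof (rule nth_equalityI)
    fix t assume "t < length (map (offset_above l) (map2 (\<union>) g f))"
    then have t: "t < Suc k" using lens by simp
    have "offset_above l (g ! t \<union> f ! t) = offset_above l (f ! t)"
      using fin[OF t] sub[OF t] mem[OF t] that by (intro offset_above_Un_above[where y = y]) auto
    then show "map (offset_above l) (map2 (\<union>) g f) ! t = map (offset_above l) f ! t"
      using t lens by simp
  qed (use lens in simp)
  have "rev [Suc x..<Suc z] = rev [Suc y..<Suc z] @ rev [Suc x..<Suc y]"
    using upt_add_eq_append[of "Suc x" "Suc y" "z - y"] xy yz by simp
  moreover have "map (\<lambda>l. map (offset_above l) (map2 (\<union>) g f)) (rev [Suc y..<Suc z])
      = map (\<lambda>l. map (offset_above l) g) (rev [Suc y..<Suc z])"
    by (rule map_cong[OF refl], rule upper) (simp del: upt_Suc)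
  moreover have "map (\<lambda>l. map (offset_above l) (map2 (\<union>) g f)) (rev [Suc x..<Suc y])
      = map (\<lambda>l. map (offset_above l) f) (rev [Suc x..<Suc y])"
    by (rule map_cong[OF refl], rule lower) (simp del: upt_Suc)
  ultimately show ?thesis
    unfolding phi_arrow_def by (simp del: upt_Suc)
qed

lemma phi_arrow_id: "phi_arrow x x f = []"
  unfolding phi_arrow_def by simp

lemma phi_arrow_sfunctor: "sfunctor (Ct n) (DWcat n) (\<lambda>x. x) phi_arrow"
  unfolding sfunctor_def Ct_def DWcat_def
  by (auto simp: phi_arrow_in_DW_hom phi_arrow_face phi_arrow_degen phi_arrow_comp phi_arrow_id)

lemma free_ext_map_rev_upt:
  "free_ext G y (map h (rev [Suc x..<Suc y]))
     = concat (map (\<lambda>l. gen_act (G l) (h l)) (rev [Suc x..<Suc y]))"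
proof -
  have "map (\<lambda>t. gen_act (G (y - t)) (map h (rev [Suc x..<Suc y]) ! t)) [0..<y - x]
      = map (\<lambda>l. gen_act (G l) (h l)) (rev [Suc x..<Suc y])"
    by (rule nth_equalityI) (simp_all add: nth_rev_upt_Suc del: upt_Suc)
  then show ?thesis
    unfolding free_ext_def by (simp del: upt_Suc)
qed

lemma concat_rev_upt_blocks:
  assumes "mono h" "x \<le> y"
  shows "concat (map (\<lambda>l. rev [Suc (h (l - 1))..<Suc (h l)]) (rev [Suc x..<Suc y]))
    = rev [Suc (h x)..<Suc (h y)]"
  using assms(2)
proof (induction y)
  case (Suc y)
  show ?case
  proof (cases "x = Suc y")
    case False
    with Suc.prems have "x \<le> y" by simp
    moreover from this have "h x \<le> h y" "h y \<le> h (Suc y)"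
      using assms(1) by (simp_all add: monoD)
    ultimately show ?thesis
      using Suc.IH upt_add_eq_append[of "Suc (h x)" "Suc (h y)" "h (Suc y) - h y"]
      by (simp del: upt_Suc add: upt_Suc_append)
  qed simp
qed simp

text \<open>Under a monotone map h of vertices, column l splits into the columns h (l - 1) < l' \<le> h l.\<close>

lemma phi_arrow_image:
  assumes "mono h" "x \<le> y"
    and columns: "\<And>l. x < l \<Longrightarrow> l \<le> y \<Longrightarrow>
      list_all2 (\<lambda>\<theta> l'. \<forall>I\<in>set f. \<theta> ! offset_above l I = offset_above l' (h ` I))
        (G l) (rev [Suc (h (l - 1))..<Suc (h l)])"
  shows "phi_arrow (h x) (h y) (map ((`) h) f) = free_ext G y (phi_arrow x y f)"
proof -
  let ?B = "\<lambda>l. rev [Suc (h (l - 1))..<Suc (h l)]"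
  let ?col = "\<lambda>l'. map (offset_above l') (map ((`) h) f)"
  have block: "gen_act (G l) (map (offset_above l) f) = map ?col (?B l)"
    if "x < l" "l \<le> y" for l
    using columns[OF that]
    by (auto simp: gen_act_def list_all2_conv_all_nth intro!: nth_equalityI simp del: upt_Suc)
  have "free_ext G y (phi_arrow x y f)
      = concat (map (\<lambda>l. gen_act (G l) (map (offset_above l) f)) (rev [Suc x..<Suc y]))"
    unfolding phi_arrow_def by (rule free_ext_map_rev_upt)
  also have "\<dots> = concat (map (\<lambda>l. map ?col (?B l)) (rev [Suc x..<Suc y]))"
    by (rule arg_cong[where f = concat], rule map_cong[OF refl], rule block) (simp_all del: upt_Suc)
  also have "\<dots> = map ?col (concat (map ?B (rev [Suc x..<Suc y])))"
    by (simp add: map_concat comp_def del: upt_Suc)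
  also have "\<dots> = phi_arrow (h x) (h y) (map ((`) h) f)"
    unfolding phi_arrow_def concat_rev_upt_blocks[OF assms(1,2)] ..
  finally show ?thesis ..
qed

lemma offset_above_image_Psub:
  assumes "mono h" "I \<in> Psub N x y" "l \<le> y"
    and "\<And>z. l' \<le> h z \<longleftrightarrow> l \<le> z"
    and "\<And>m. l \<le> m \<Longrightarrow> m \<le> N \<Longrightarrow> \<theta> ! (m - l) = h m - l'"
  shows "\<theta> ! offset_above l I = offset_above l' (h ` I)"
  using assms Psub_finite[OF assms(2)]
  by (intro offset_above_image[where y = y]) (auto simp: mem_Psub_iff)

lemma DW_cof_gen_columns:
  assumes "i \<le> n" "0 < l" "l \<le> y"
  shows "list_all2 (\<lambda>\<theta> l'. \<forall>I\<in>Psub (n - 1) x y.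
      \<theta> ! offset_above l I = offset_above l' (cof_map i ` I))
    (DW_cof_gen n i l) (rev [Suc (cof_map i (l - 1))..<Suc (cof_map i l)])"
proof -
  consider "l < i" | "l = i" | "i < l" by linarith
  then show ?thesis
  proof cases
    case 1
    then have "DW_cof_gen n i l = [ldel (i - l) (topsimp (n - l))]"
      "rev [Suc (cof_map i (l - 1))..<Suc (cof_map i l)] = [l]"
      using assms by (auto simp: DW_cof_gen_def cof_map_def)
    then show ?thesis using 1 assms
      by (auto intro!: offset_above_image_Psub[OF mono_cof_map])
        (auto simp: cof_map_def topsimp_def nth_ldel_upt split: if_splits simp del: upt_Suc)
  next
    case 2
    then have "DW_cof_gen n i l = [topsimp (n - Suc i), ldel 0 (topsimp (n - i))]"
      "rev [Suc (cof_map i (l - 1))..<Suc (cof_map i l)] = [Suc i, i]"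
      using assms by (auto simp: DW_cof_gen_def cof_map_def)
    then show ?thesis using 2 assms
      by (auto intro!: offset_above_image_Psub[OF mono_cof_map])
        (auto simp: cof_map_def topsimp_def nth_ldel_upt split: if_splits simp del: upt_Suc)
  next
    case 3
    then have "DW_cof_gen n i l = [topsimp (n - Suc l)]"
      "rev [Suc (cof_map i (l - 1))..<Suc (cof_map i l)] = [Suc l]"
      using assms by (auto simp: DW_cof_gen_def cof_map_def)
    then show ?thesis using 3 assms
      by (auto intro!: offset_above_image_Psub[OF mono_cof_map])
        (auto simp: cof_map_def topsimp_def split: if_splits simp del: upt_Suc)
  qed
qed

lemma DW_cod_gen_columns:
  assumes "i \<le> n" "0 < l" "l \<le> y"
  shows "list_all2 (\<lambda>\<theta> l'. \<forall>I\<in>Psub (Suc n) x y.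
      \<theta> ! offset_above l I = offset_above l' (codeg_map i ` I))
    (DW_cod_gen n i l) (rev [Suc (codeg_map i (l - 1))..<Suc (codeg_map i l)])"
proof -
  consider "l \<le> i" | "l = Suc i" | "Suc i < l" by linarith
  then show ?thesis
  proof cases
    case 1
    then have "DW_cod_gen n i l = [ldup (i - l) (topsimp (n - l))]"
      "rev [Suc (codeg_map i (l - 1))..<Suc (codeg_map i l)] = [l]"
      using assms by (auto simp: DW_cod_gen_def codeg_map_def)
    then show ?thesis using 1 assms
      by (auto intro!: offset_above_image_Psub[OF mono_codeg_map])
        (auto simp: codeg_map_def topsimp_def nth_ldup_upt split: if_splits simp del: upt_Suc)
  next
    case 2
    then show ?thesis by (simp add: DW_cod_gen_def codeg_map_def)
  next
    case 3
    then obtain m where "l = Suc (Suc m)" by (auto dest: less_imp_Suc_add)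
    with 3 have "DW_cod_gen n i l = [topsimp (n - (l - 1))]"
      "rev [Suc (codeg_map i (l - 1))..<Suc (codeg_map i l)] = [l - 1]"
      by (auto simp: DW_cod_gen_def codeg_map_def)
    then show ?thesis using 3 assms
      by (auto intro!: offset_above_image_Psub[OF mono_codeg_map])
        (auto simp: codeg_map_def topsimp_def split: if_splits simp del: upt_Suc)
  qed
qed

lemma phi_arrow_cof:
  assumes "i \<le> n" "f \<in> Ct_hom (n - 1) x y k"
  shows "phi_arrow (cof_map i x) (cof_map i y) (map ((`) (cof_map i)) f)
    = free_ext (DW_cof_gen n i) y (phi_arrow x y f)"
proof (rule phi_arrow_image[OF mono_cof_map])
  show "x \<le> y" using Ct_hom_bounds[OF assms(2)] by simp
  have "set f \<subseteq> Psub (n - 1) x y" using assms(2) by (simp add: mem_Ct_hom_iff)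
  then show "list_all2 (\<lambda>\<theta> l'. \<forall>I\<in>set f. \<theta> ! offset_above l I = offset_above l' (cof_map i ` I))
      (DW_cof_gen n i l) (rev [Suc (cof_map i (l - 1))..<Suc (cof_map i l)])"
    if "x < l" "l \<le> y" for l
  proof -
    from that have "0 < l" by simp
    from DW_cof_gen_columns[OF assms(1) this \<open>l \<le> y\<close>, of x] show ?thesis
      by (rule list_all2_mono) (use \<open>set f \<subseteq> Psub (n - 1) x y\<close> in blast)
  qed
qed

lemma phi_arrow_codeg:
  assumes "i \<le> n" "f \<in> Ct_hom (Suc n) x y k"
  shows "phi_arrow (codeg_map i x) (codeg_map i y) (map ((`) (codeg_map i)) f)
    = free_ext (DW_cod_gen n i) y (phi_arrow x y f)"
proof (rule phi_arrow_image[OF mono_codeg_map])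
  show "x \<le> y" using Ct_hom_bounds[OF assms(2)] by simp
  have "set f \<subseteq> Psub (Suc n) x y" using assms(2) by (simp add: mem_Ct_hom_iff)
  then show "list_all2 (\<lambda>\<theta> l'. \<forall>I\<in>set f. \<theta> ! offset_above l I = offset_above l' (codeg_map i ` I))
      (DW_cod_gen n i l) (rev [Suc (codeg_map i (l - 1))..<Suc (codeg_map i l)])"
    if "x < l" "l \<le> y" for l
  proof -
    from that have "0 < l" by simp
    from DW_cod_gen_columns[OF assms(1) this \<open>l \<le> y\<close>, of x] show ?thesis
      by (rule list_all2_mono) (use \<open>set f \<subseteq> Psub (Suc n) x y\<close> in blast)
  qed
qed

lemma phi_arrow_cosimp_morphism: "cosimp_morphism Ctilde DWbar (\<lambda>n x. x) (\<lambda>n. phi_arrow)"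
  unfolding cosimp_morphism_def sfun_agree_def
  by (simp add: Ctilde_def DWbar_def phi_arrow_sfunctor, simp add: Ct_def phi_arrow_cof phi_arrow_codeg)

section \<open>Uniqueness\<close>

context
  fixes Qo :: "nat \<Rightarrow> nat \<Rightarrow> nat"
    and Qa :: "nat \<Rightarrow> nat \<Rightarrow> nat \<Rightarrow> nat set list \<Rightarrow> nat list list"
  assumes morphism: "cosimp_morphism Ctilde DWbar Qo Qa"
    and identity_on_objects: "\<forall>n. \<forall>x\<in>sObj (cLev Ctilde n). Qo n x = x"
begin

lemma Qo_eq: "x \<le> n \<Longrightarrow> Qo n x = x"
  using identity_on_objects by (simp add: Ctilde_def Ct_def)

lemma Q_sfunctor: "sfunctor (Ct n) (DWcat n) (Qo n) (Qa n)"
  using morphism by (simp add: cosimp_morphism_def Ctilde_def DWbar_def)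

lemma Qa_in_DW_hom: "f \<in> Ct_hom n x y k \<Longrightarrow> Qa n x y f \<in> DW_hom n x y k"
  using sfunctor_hom[OF Q_sfunctor, of x n y f k] Ct_hom_bounds[of f n x y k]
  by (simp add: Ct_def DWcat_def Qo_eq)

lemma Qa_cof:
  assumes "1 \<le> n" "i \<le> n" "f \<in> Ct_hom (n - 1) x y k"
  shows "Qa n (cof_map i x) (cof_map i y) (map ((`) (cof_map i)) f)
    = free_ext (DW_cof_gen n i) y (Qa (n - 1) x y f)"
proof -
  have "sfun_agree (Ct (n - 1))
          (\<lambda>x. Qo n (cof_map i x))
          (\<lambda>x y f. Qa n (cof_map i x) (cof_map i y) (map ((`) (cof_map i)) f))
          (\<lambda>x. cof_map i (Qo (n - 1) x))
          (\<lambda>x y f. free_ext (DW_cof_gen n i) (Qo (n - 1) y) (Qa (n - 1) x y f))"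
    using morphism assms(1,2) by (simp add: cosimp_morphism_def Ctilde_def DWbar_def)
  then show ?thesis
    using assms(3) Ct_hom_bounds[OF assms(3)] Qo_eq[of y "n - 1"]
    by (auto simp: sfun_agree_def Ct_def)
qed

lemma Qa_edge: "a < b \<Longrightarrow> b \<le> n \<Longrightarrow> Qa n a b [{a, b}] = phi_arrow a b [{a, b}]"
proof (induction n arbitrary: a b)
  case (Suc n)
  have edge: "[{a, b}] \<in> Ct_hom (Suc n) a b 0"
    using Suc.prems by (simp add: singleton_in_Ct_hom edge_in_Psub)
  show ?case
  proof (cases "n = 0")
    case True
    then have "a = 0" "b = 1" using Suc.prems by auto
    then show ?thesis
      using Qa_in_DW_hom[OF edge] phi_arrow_in_DW_hom[OF edge] True DW_hom_1_0_1_0 by simp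
  next
    case False
    define i where "i = (if 0 < a then 0 else if b < Suc n then Suc n else 1)"
      \<comment> \<open>a vertex of [Suc n] other than a and b\<close>
    have i: "i \<le> Suc n" "a \<noteq> i" "b \<noteq> i" using Suc.prems False unfolding i_def by auto
    define a' b' where "a' = codeg_map i a" and "b' = codeg_map i b"
    have a: "cof_map i a' = a" and b: "cof_map i b' = b"
      using i cof_map_codeg_map unfolding a'_def b'_def by auto
    have "a' < b'"
      using mono_cof_map[of i] Suc.prems unfolding a[symmetric] b[symmetric]
      by (meson monoD not_le)
    moreover have "b' \<le> n" using i Suc.prems unfolding b'_def codeg_map_def by auto
    ultimately have edge': "[{a', b'}] \<in> Ct_hom n a' b' 0"
      by (simp add: singleton_in_Ct_hom edge_in_Psub)
    have image: "map ((`) (cof_map i)) [{a', b'}] = [{a, b}]" using a b by simp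
    have "Qa (Suc n) a b [{a, b}] = free_ext (DW_cof_gen (Suc n) i) b' (Qa n a' b' [{a', b'}])"
      using Qa_cof[of "Suc n" i "[{a', b'}]" a' b' 0] edge' i a b image by simp
    also have "\<dots> = free_ext (DW_cof_gen (Suc n) i) b' (phi_arrow a' b' [{a', b'}])"
      using Suc.IH \<open>a' < b'\<close> \<open>b' \<le> n\<close> by simp
    also have "\<dots> = phi_arrow a b [{a, b}]"
      using phi_arrow_cof[of i "Suc n" "[{a', b'}]" a' b' 0] edge' i a b image by simp
    finally show ?thesis .
  qed
qed simp

lemma Qa_vertex: "I \<in> Psub n x y \<Longrightarrow> Qa n x y [I] = phi_arrow x y [I]"
proof (induction y arbitrary: I rule: less_induct)
  case (less y)
  have I: "x \<in> I" "y \<in> I" "I \<subseteq> {x..y}" "y \<le> n" using less.prems by (simp_all add: mem_Psub_iff)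
  show ?case
  proof (cases "x = y")
    case True
    then have "[I] = sId (Ct n) x 0" using I by (auto simp: Ct_def)
    then have "Qa n x y [I] = []"
      using sfunctor_id[OF Q_sfunctor[of n], of x 0] I True by (simp add: Ct_def DWcat_def)
    then show ?thesis using True by (simp add: phi_arrow_id)
  next
    case False
    define y' where "y' = Max (I - {y})"
    have fin: "finite (I - {y})" using I by (meson finite_Diff finite_atLeastAtMost finite_subset)
    have "x \<in> I - {y}" using I False by auto
    then have y': "y' \<in> I - {y}" "x \<le> y'" and above: "\<forall>z\<in>I - {y}. z \<le> y'"
      using fin Max_in[OF fin] Max_ge[OF fin] unfolding y'_def by blast+
    then have "y' < y" using I by fastforce
    have "I - {y} \<subseteq> {x..y'}" using I(3) above by fastforce
    then have rest: "I - {y} \<in> Psub n x y'"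
      using \<open>x \<in> I - {y}\<close> y' \<open>y' < y\<close> I(4) by (simp add: mem_Psub_iff)
    have split: "I = {y', y} \<union> (I - {y})" using y' I by auto
    have edge: "{y', y} \<in> Psub n y' y" using \<open>y' < y\<close> I by (simp add: edge_in_Psub)
    have objs: "x \<in> sObj (Ct n)" "y' \<in> sObj (Ct n)" "y \<in> sObj (Ct n)"
      using I \<open>y' < y\<close> \<open>x \<le> y'\<close> by (auto simp: Ct_def)
    have homs: "[I - {y}] \<in> sHom (Ct n) x y' 0" "[{y', y}] \<in> sHom (Ct n) y' y 0"
      using singleton_in_Ct_hom[OF rest] singleton_in_Ct_hom[OF edge] by (simp_all add: Ct_def)
    have "Qa n x y [I] = Qa n x y (sComp (Ct n) x y' y [{y', y}] [I - {y}])"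
      using split by (simp add: Ct_def)
    also have "\<dots> = Qa n y' y [{y', y}] @ Qa n x y' [I - {y}]"
      using sfunctor_comp[OF Q_sfunctor objs homs] by (simp add: DWcat_def)
    also have "\<dots> = phi_arrow y' y [{y', y}] @ phi_arrow x y' [I - {y}]"
      using Qa_edge[OF \<open>y' < y\<close> \<open>y \<le> n\<close>] less.IH[OF \<open>y' < y\<close> rest] by simp
    also have "\<dots> = phi_arrow x y [I]"
      using phi_arrow_comp[OF singleton_in_Ct_hom[OF rest] singleton_in_Ct_hom[OF edge]] split
      by simp
    finally show ?thesis .
  qed
qed

lemma Qa_eq_phi_arrow: "f \<in> Ct_hom n x y k \<Longrightarrow> Qa n x y f = phi_arrow x y f"
proof (induction k arbitrary: f)
  case 0
  then obtain I where "f = [I]" "I \<in> Psub n x y"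
    by (auto simp: mem_Ct_hom_iff length_Suc_conv)
  then show ?case by (simp add: Qa_vertex)
next
  case (Suc k)
  have objs: "x \<in> sObj (Ct n)" "y \<in> sObj (Ct n)" and hom: "f \<in> sHom (Ct n) x y (Suc k)"
    using Ct_hom_bounds[OF Suc.prems] Suc.prems by (auto simp: Ct_def)
  have face: "Qa n x y (ldel j f) = map (ldel j) (Qa n x y f)" if "j \<le> Suc k" for j
    using sfunctor_face[OF Q_sfunctor objs hom that] by (simp add: Ct_def DWcat_def)
  have "map (ldel j) (Qa n x y f) = map (ldel j) (phi_arrow x y f)" if "j \<le> Suc k" for j
    using face[OF that] Suc.IH[OF ldel_in_Ct_hom[OF Suc.prems that]] phi_arrow_face by simp
  then show ?case
    by (intro DW_hom_eqI[OF Qa_in_DW_hom[OF Suc.prems] phi_arrow_in_DW_hom[OF Suc.prems]]) simp_all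
qed

end

theorem proposition3p3:
  shows "\<exists>Po Pa.
     (cosimp_morphism Ctilde DWbar Po Pa \<and> (\<forall>n. \<forall>x\<in>sObj (cLev Ctilde n). Po n x = x)) \<and>
     (\<forall>Qo Qa. cosimp_morphism Ctilde DWbar Qo Qa \<and> (\<forall>n. \<forall>x\<in>sObj (cLev Ctilde n). Qo n x = x)
        \<longrightarrow> (\<forall>n. sfun_agree (cLev Ctilde n) (Po n) (Pa n) (Qo n) (Qa n)))"
proof (intro exI conjI allI impI)
  show "cosimp_morphism Ctilde DWbar (\<lambda>n x. x) (\<lambda>n. phi_arrow)"
    by (rule phi_arrow_cosimp_morphism)
  fix n
  show "\<forall>x\<in>sObj (cLev Ctilde n). x = x" by simp
next
  fix Qo Qa n
  assume "cosimp_morphism Ctilde DWbar Qo Qa \<and> (\<forall>n. \<forall>x\<in>sObj (cLev Ctilde n). Qo n x = x)"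
  then show "sfun_agree (cLev Ctilde n) (\<lambda>x. x) phi_arrow (Qo n) (Qa n)"
    using Qo_eq Qa_eq_phi_arrow by (auto simp: sfun_agree_def Ctilde_def Ct_def)
qed

end
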